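(* Suppose $\mathcal C,\widetilde{\mathcal C}$ are self-adjoint, positive definite, compact operators on $L_2(\mathcal X,\nu_{\mathcal X})$ which diagonalize with respect to the same orthonormal basis $\{e_j\}_{j\in\mathbb N}$ of $L_2(\mathcal X,\nu_{\mathcal X})$, i.e. there are eigenvalues $\gamma_j,\widetilde\gamma_j\in(0,\infty)$, accumulating only at zero, with $\mathcal Ce_j=\gamma_je_j$ and $\widetilde{\mathcal C}e_j=\widetilde\gamma_je_j$ for all $j$. Then the following two conditions both hold: (I) the Cameron–Martin spaces $\mathcal C^{1/2}(L_2)$ and $\widetilde{\mathcal C}^{1/2}(L_2)$ are norm equivalent Hilbert spaces; (III) there exists $a\in(0,\infty)$ such that $\mathcal C^{-1/2}\widetilde{\mathcal C}\mathcal C^{-1/2}-a\mathcal I$ is compact on $L_2(\mathcal X,\nu_{\mathcal X})$; if and only if there exists $a\in(0,\infty)$ with $\lim_{j\to\infty}\widetilde\gamma_j/\gamma_j=a$.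
   Context: $(\mathcal X,d_{\mathcal X})$ is a connected, compact metric space of infinite cardinality and $\nu_{\mathcal X}$ a strictly positive finite Borel measure; $L_2=L_2(\mathcal X,\nu_{\mathcal X})$, $\mathcal I$ the identity. The Cameron–Martin space $\mathcal C^{1/2}(L_2)$ carries the norm $\|u\|=\|\mathcal C^{-1/2}u\|_{L_2}$, analogously for $\widetilde{\mathcal C}$. *)

theory Defs
  imports "HOL-Analysis.Analysis"
begin

text \<open>The Hilbert space L2 is modelled abstractly by a real Hilbert space type
  (real inner product space that is complete). Operators are functions on it.\<close>

definition selfadjoint_op :: "('a::real_inner \<Rightarrow> 'a) \<Rightarrow> bool" where
  "selfadjoint_op T \<longleftrightarrow> (\<forall>x y. inner (T x) y = inner x (T y))"

definition posdef_op :: "('a::real_inner \<Rightarrow> 'a) \<Rightarrow> bool" where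
  "posdef_op T \<longleftrightarrow> (\<forall>x. x \<noteq> 0 \<longrightarrow> inner (T x) x > 0)"

definition positive_op :: "('a::real_inner \<Rightarrow> 'a) \<Rightarrow> bool" where
  "positive_op T \<longleftrightarrow> (\<forall>x. inner (T x) x \<ge> 0)"

definition compact_op :: "('a::real_normed_vector \<Rightarrow> 'b::real_normed_vector) \<Rightarrow> bool" where
  "compact_op K \<longleftrightarrow> bounded_linear K \<and> compact (closure (K ` ball 0 1))"

definition orthonormal_basis :: "(nat \<Rightarrow> 'a::real_inner) \<Rightarrow> bool" where
  "orthonormal_basis e \<longleftrightarrow> (\<forall>i j. inner (e i) (e j) = (if i = j then 1 else 0))
       \<and> closure (span (range e)) = UNIV"

definition sqrt_op :: "('a::real_inner \<Rightarrow> 'a) \<Rightarrow> ('a \<Rightarrow> 'a)" where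
  "sqrt_op C = (THE S. bounded_linear S \<and> selfadjoint_op S \<and> positive_op S \<and> S \<circ> S = C)"

definition invsqrt_op :: "('a::real_inner \<Rightarrow> 'a) \<Rightarrow> ('a \<Rightarrow> 'a)" where
  "invsqrt_op C = inv_into UNIV (sqrt_op C)"

definition CM_space :: "('a::real_inner \<Rightarrow> 'a) \<Rightarrow> 'a set" where
  "CM_space C = range (sqrt_op C)"

definition CM_norm :: "('a::real_inner \<Rightarrow> 'a) \<Rightarrow> 'a \<Rightarrow> real" where
  "CM_norm C u = norm (invsqrt_op C u)"

definition CM_norm_equivalent :: "('a::real_inner \<Rightarrow> 'a) \<Rightarrow> ('a \<Rightarrow> 'a) \<Rightarrow> bool" where
  "CM_norm_equivalent C C' \<longleftrightarrow> CM_space C = CM_space C' \<and>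
     (\<exists>c1 c2. c1 > 0 \<and> c2 > 0 \<and> (\<forall>u\<in>CM_space C.
        c1 * CM_norm C u \<le> CM_norm C' u \<and> CM_norm C' u \<le> c2 * CM_norm C u))"

text \<open>Natural domain of the (possibly unbounded) operator C^(-1/2) C' C^(-1/2).\<close>
definition sandwich_dom :: "('a::real_inner \<Rightarrow> 'a) \<Rightarrow> ('a \<Rightarrow> 'a) \<Rightarrow> 'a set" where
  "sandwich_dom C C' = {x \<in> CM_space C. C' (invsqrt_op C x) \<in> CM_space C}"

definition sandwich_op :: "('a::real_inner \<Rightarrow> 'a) \<Rightarrow> ('a \<Rightarrow> 'a) \<Rightarrow> 'a \<Rightarrow> 'a" where
  "sandwich_op C C' x = invsqrt_op C (C' (invsqrt_op C x))"

text \<open>Condition (III) for a given a: C^(-1/2) C' C^(-1/2) - a I is densely defined and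
  agrees on its domain with a compact operator on the whole space.\<close>
definition sandwich_minus_compact :: "('a::real_inner \<Rightarrow> 'a) \<Rightarrow> ('a \<Rightarrow> 'a) \<Rightarrow> real \<Rightarrow> bool" where
  "sandwich_minus_compact C C' a \<longleftrightarrow> closure (sandwich_dom C C') = UNIV \<and>
     (\<exists>K. compact_op K \<and> (\<forall>x\<in>sandwich_dom C C'. sandwich_op C C' x - a *\<^sub>R x = K x))"

end

theory Submission
  imports Defs
begin

text \<open>Both operators are diagonal in the basis \<open>e\<close>, so everything reduces to multiplier
  sequences: the square root of \<open>C\<close> multiplies the \<open>j\<close>-th coefficient by \<open>sqrt (\<gamma> j)\<close>, so
  the Cameron--Martin norm of \<open>sqrt_op C x\<close> is \<open>norm x\<close>, and the sandwiched operator minus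
  \<open>a\<close> multiplies \<open>e j\<close> by \<open>\<gamma>t j / \<gamma> j - a\<close>. By Bessel's inequality every orthonormal
  sequence tends weakly to \<open>0\<close>, so a compact operator maps it to a null sequence; this forces
  \<open>\<gamma>t j / \<gamma> j \<longlonglongrightarrow> a\<close>. Conversely, if the ratio tends to \<open>a > 0\<close>, it is bounded above and
  away from \<open>0\<close>, which gives the equivalence of the norms, and the diagonal operator with the
  null multipliers \<open>\<gamma>t j / \<gamma> j - a\<close> is compact: up to any \<open>\<epsilon>\<close> it maps the unit ball into a
  compact box in the span of finitely many \<open>e j\<close>.\<close>

section \<open>Orthonormal sequences\<close>

definition orthonormal_seq :: "(nat \<Rightarrow> 'a::real_inner) \<Rightarrow> bool" where
  "orthonormal_seq e \<longleftrightarrow> (\<forall>i j. inner (e i) (e j) = (if i = j then 1 else 0))"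

lemma orthonormal_basis_imp_orthonormal_seq: "orthonormal_basis e \<Longrightarrow> orthonormal_seq e"
  by (simp add: orthonormal_basis_def orthonormal_seq_def)

lemma orthonormal_seqD: "orthonormal_seq e \<Longrightarrow> inner (e i) (e j) = (if i = j then 1 else 0)"
  by (simp add: orthonormal_seq_def)

lemma norm_orthonormal_seq: "orthonormal_seq e \<Longrightarrow> norm (e j) = 1"
  by (simp add: orthonormal_seqD norm_eq_sqrt_inner)

lemma inner_sum_orthonormal:
  assumes "orthonormal_seq e" "finite F"
  shows "inner (\<Sum>j\<in>F. c j *\<^sub>R e j) (e k) = (if k \<in> F then c k else 0)"
proof -
  have "inner (\<Sum>j\<in>F. c j *\<^sub>R e j) (e k) = (\<Sum>j\<in>F. if j = k then c j else 0)"
    using assms(1) by (simp add: inner_sum_left orthonormal_seqD if_distrib cong: if_cong)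
  then show ?thesis
    using assms(2) by (simp add: sum.delta')
qed

lemma norm_sum_orthonormal:
  assumes "orthonormal_seq e" "finite F"
  shows "norm (\<Sum>j\<in>F. c j *\<^sub>R e j) ^ 2 = (\<Sum>j\<in>F. (c j)^2)"
proof -
  have "norm (\<Sum>j\<in>F. c j *\<^sub>R e j) ^ 2 = (\<Sum>i\<in>F. c i * inner (\<Sum>j\<in>F. c j *\<^sub>R e j) (e i))"
    by (simp add: power2_norm_eq_inner inner_sum_right)
  also have "\<dots> = (\<Sum>i\<in>F. (c i)^2)"
    using assms by (simp add: inner_sum_orthonormal power2_eq_square)
  finally show ?thesis .
qed

lemma sum_sq_functional_orthonormal_le:
  fixes f :: "'a::real_inner \<Rightarrow> real"
  assumes "orthonormal_seq e" "finite F" "linear f" and bound: "\<And>x. \<bar>f x\<bar> \<le> B * norm x"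
  shows "(\<Sum>j\<in>F. (f (e j))^2) \<le> B^2"
proof -
  define v where "v = (\<Sum>j\<in>F. f (e j) *\<^sub>R e j)"
  have fv: "f v = (\<Sum>j\<in>F. (f (e j))^2)"
    using \<open>linear f\<close> by (simp add: v_def linear_sum linear_scale power2_eq_square)
  have nv: "norm v ^ 2 = (\<Sum>j\<in>F. (f (e j))^2)"
    unfolding v_def using assms(1,2) by (rule norm_sum_orthonormal)
  have le: "norm v ^ 2 \<le> B * norm v"
    using bound[of v] by (simp add: fv nv[symmetric])
  show ?thesis
  proof (cases "norm v = 0")
    case True
    then show ?thesis
      using nv by simp
  next
    case False
    then have "norm v \<le> B"
      using le by (simp add: power2_eq_square)
    then show ?thesis
      using nv power_mono[of "norm v" B 2] by simp
  qed
qed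

lemma summable_sq_functional_orthonormal:
  fixes f :: "'a::real_inner \<Rightarrow> real"
  assumes "orthonormal_seq e" "linear f" "\<And>x. \<bar>f x\<bar> \<le> B * norm x"
  shows "summable (\<lambda>j. (f (e j))^2)" and "(\<Sum>j. (f (e j))^2) \<le> B^2"
proof -
  have partial: "(\<Sum>j<n. (f (e j))^2) \<le> B^2" for n
    using sum_sq_functional_orthonormal_le[OF assms(1) finite_lessThan assms(2,3)] .
  show "summable (\<lambda>j. (f (e j))^2)"
    using partial by (intro summableI_nonneg_bounded) auto
  then show "(\<Sum>j. (f (e j))^2) \<le> B^2"
    using partial by (intro suminf_le_const) auto
qed

lemma bounded_linear_orthonormal_tendsto_0:
  fixes f :: "'a::real_inner \<Rightarrow> real"
  assumes "orthonormal_seq e" "bounded_linear f"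
  shows "(\<lambda>j. f (e j)) \<longlonglongrightarrow> 0"
proof -
  obtain B where "\<forall>x. norm (f x) \<le> norm x * B"
    using bounded_linear.bounded[OF assms(2)] by blast
  then have "\<bar>f x\<bar> \<le> B * norm x" for x
    by (simp add: mult.commute)
  then have "summable (\<lambda>j. (f (e j))^2)"
    using assms by (intro summable_sq_functional_orthonormal(1) bounded_linear.linear)
  then have "(\<lambda>j. sqrt ((f (e j))^2)) \<longlonglongrightarrow> sqrt 0"
    by (intro tendsto_real_sqrt summable_LIMSEQ_zero)
  then show ?thesis
    by (simp add: tendsto_rabs_zero_iff)
qed

lemma bessel_inequality:
  assumes "orthonormal_seq e"
  shows "summable (\<lambda>j. (inner x (e j))^2)" and "(\<Sum>j. (inner x (e j))^2) \<le> norm x ^ 2"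
  using summable_sq_functional_orthonormal[OF assms bounded_linear.linear[OF bounded_linear_inner_right]
      Cauchy_Schwarz_ineq2[of x]] by (simp_all add: mult.commute)

lemma summable_orthonormal_series:
  fixes e :: "nat \<Rightarrow> 'a::{real_inner,complete_space}"
  assumes "orthonormal_seq e" "summable (\<lambda>j. (c j)^2)"
  shows "summable (\<lambda>j. c j *\<^sub>R e j)"
proof -
  have "Cauchy (\<lambda>n. \<Sum>j<n. c j *\<^sub>R e j)"
  proof (rule CauchyI')
    fix \<epsilon> :: real assume "\<epsilon> > 0"
    then obtain N where N: "\<And>m n. m \<ge> N \<Longrightarrow> norm (\<Sum>j\<in>{m..<n}. (c j)^2) < \<epsilon>^2"
      using assms(2) unfolding summable_Cauchy by (meson zero_less_power)
    have "dist (\<Sum>j<m. c j *\<^sub>R e j) (\<Sum>j<n. c j *\<^sub>R e j) < \<epsilon>" if "m \<ge> N" "n > m" for m n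
    proof -
      have "(\<Sum>j<n. c j *\<^sub>R e j) - (\<Sum>j<m. c j *\<^sub>R e j) = (\<Sum>j\<in>{m..<n}. c j *\<^sub>R e j)"
        using \<open>n > m\<close> by (simp add: lessThan_atLeast0 sum_diff_nat_ivl)
      then have "dist (\<Sum>j<m. c j *\<^sub>R e j) (\<Sum>j<n. c j *\<^sub>R e j) = norm (\<Sum>j\<in>{m..<n}. c j *\<^sub>R e j)"
        by (metis dist_commute dist_norm)
      moreover have "norm (\<Sum>j\<in>{m..<n}. c j *\<^sub>R e j) ^ 2 < \<epsilon> ^ 2"
        using N[OF \<open>m \<ge> N\<close>, of n] by (simp add: norm_sum_orthonormal[OF assms(1)] sum_nonneg)
      ultimately show ?thesis
        using \<open>\<epsilon> > 0\<close> by (simp add: power_less_imp_less_base less_imp_le)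
    qed
    then show "\<exists>M. \<forall>m\<ge>M. \<forall>n>m. dist (\<Sum>j<m. c j *\<^sub>R e j) (\<Sum>j<n. c j *\<^sub>R e j) < \<epsilon>"
      by blast
  qed
  then show ?thesis
    by (simp add: summable_iff_convergent Cauchy_convergent_iff)
qed

lemma orthonormal_series_inner_sums:
  fixes e :: "nat \<Rightarrow> 'a::{real_inner,complete_space}"
  assumes "orthonormal_seq e" "summable (\<lambda>j. (c j)^2)"
  shows "(\<lambda>j. c j * inner (e j) v) sums inner (\<Sum>j. c j *\<^sub>R e j) v"
  using bounded_linear.sums[OF bounded_linear_inner_left
      summable_sums[OF summable_orthonormal_series[OF assms]], of v] by simp

lemma inner_orthonormal_series:
  fixes e :: "nat \<Rightarrow> 'a::{real_inner,complete_space}"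
  assumes "orthonormal_seq e" "summable (\<lambda>j. (c j)^2)"
  shows "inner (\<Sum>j. c j *\<^sub>R e j) (e k) = c k"
proof -
  have "(\<lambda>j. if j = k then c j else 0) sums inner (\<Sum>j. c j *\<^sub>R e j) (e k)"
    using orthonormal_series_inner_sums[OF assms, of "e k"] assms(1)
    by (simp add: orthonormal_seqD if_distrib cong: if_cong)
  then show ?thesis
    using sums_single[of k c] sums_unique2 by blast
qed

lemma norm_orthonormal_series:
  fixes e :: "nat \<Rightarrow> 'a::{real_inner,complete_space}"
  assumes "orthonormal_seq e" "summable (\<lambda>j. (c j)^2)"
  shows "norm (\<Sum>j. c j *\<^sub>R e j) ^ 2 = (\<Sum>j. (c j)^2)"
  using orthonormal_series_inner_sums[OF assms, of "\<Sum>j. c j *\<^sub>R e j"]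
  by (simp add: inner_commute[of "e _"] inner_orthonormal_series[OF assms] power2_norm_eq_inner
      sums_iff power2_eq_square dot_square_norm)

lemma orthonormal_basis_eqI:
  assumes "orthonormal_basis e" "\<And>k. inner x (e k) = inner y (e k)"
  shows "x = y"
proof -
  define T where "T = {z. inner (x - y) z = 0}"
  have "range e \<subseteq> T"
    using assms(2) by (auto simp: T_def inner_diff_left)
  moreover have "subspace T"
    unfolding T_def subspace_def by (simp add: inner_add_right)
  ultimately have "span (range e) \<subseteq> T"
    by (rule span_minimal)
  moreover have "closed T"
    unfolding T_def by (intro closed_Collect_eq continuous_intros)
  ultimately have "closure (span (range e)) \<subseteq> T"
    by (rule closure_minimal)
  then have "x - y \<in> T"
    using assms(1) by (auto simp: orthonormal_basis_def)
  then show ?thesis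
    by (simp add: T_def)
qed

section \<open>Diagonal operators\<close>

text \<open>The defining series need not converge for unbounded multipliers \<open>d\<close>, hence the bounds
  \<open>\<bar>d j\<bar> \<le> B\<close> in the lemmas below.\<close>
definition diagonal_op :: "(nat \<Rightarrow> 'a::real_inner) \<Rightarrow> (nat \<Rightarrow> real) \<Rightarrow> 'a \<Rightarrow> 'a" where
  "diagonal_op e d x = (\<Sum>j. (d j * inner x (e j)) *\<^sub>R e j)"

lemma summable_diagonal_coeffs:
  assumes "orthonormal_seq e" "\<And>j. \<bar>d j\<bar> \<le> B"
  shows "summable (\<lambda>j. (d j * inner x (e j))^2)"
proof (rule summable_comparison_test'[where g="\<lambda>j. B^2 * (inner x (e j))^2"])
  show "summable (\<lambda>j. B^2 * (inner x (e j))^2)"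
    using bessel_inequality(1)[OF assms(1)] by (rule summable_mult)
  show "norm ((d j * inner x (e j))^2) \<le> B^2 * (inner x (e j))^2" for j
    using power_mono[OF assms(2)[of j], of 2] by (simp add: power_mult_distrib mult_right_mono)
qed

lemma inner_diagonal_op:
  fixes e :: "nat \<Rightarrow> 'a::{real_inner,complete_space}"
  assumes "orthonormal_seq e" "\<And>j. \<bar>d j\<bar> \<le> B"
  shows "inner (diagonal_op e d x) (e k) = d k * inner x (e k)"
  unfolding diagonal_op_def by (rule inner_orthonormal_series[OF assms(1) summable_diagonal_coeffs[OF assms]])

lemma diagonal_op_inner_sums:
  fixes e :: "nat \<Rightarrow> 'a::{real_inner,complete_space}"
  assumes "orthonormal_seq e" "\<And>j. \<bar>d j\<bar> \<le> B"
  shows "(\<lambda>j. d j * inner x (e j) * inner y (e j)) sums inner (diagonal_op e d x) y"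
  unfolding diagonal_op_def
  using orthonormal_series_inner_sums[OF assms(1) summable_diagonal_coeffs[OF assms]]
  by (simp add: inner_commute[of "e _"])

lemma norm_diagonal_op_le:
  fixes e :: "nat \<Rightarrow> 'a::{real_inner,complete_space}"
  assumes "orthonormal_seq e" "\<And>j. \<bar>d j\<bar> \<le> B"
  shows "norm (diagonal_op e d x) \<le> B * norm x"
proof -
  have sq: "(d j * inner x (e j))^2 \<le> B^2 * (inner x (e j))^2" for j
    using power_mono[OF assms(2)[of j], of 2] by (simp add: power_mult_distrib mult_right_mono)
  have "norm (diagonal_op e d x) ^ 2 = (\<Sum>j. (d j * inner x (e j))^2)"
    unfolding diagonal_op_def
    by (rule norm_orthonormal_series[OF assms(1) summable_diagonal_coeffs[OF assms]])
  also have "\<dots> \<le> (\<Sum>j. B^2 * (inner x (e j))^2)"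
    using sq summable_diagonal_coeffs[OF assms] summable_mult[OF bessel_inequality(1)[OF assms(1)]]
    by (rule suminf_le)
  also have "\<dots> = B^2 * (\<Sum>j. (inner x (e j))^2)"
    using bessel_inequality(1)[OF assms(1)] by (rule suminf_mult)
  also have "\<dots> \<le> B^2 * norm x ^ 2"
    using bessel_inequality(2)[OF assms(1)] by (rule mult_left_mono) simp
  also have "\<dots> = (B * norm x) ^ 2"
    by (simp add: power_mult_distrib)
  finally have "norm (diagonal_op e d x) ^ 2 \<le> (B * norm x) ^ 2" .
  moreover have "B * norm x \<ge> 0"
    using abs_ge_zero[of "d 0"] assms(2)[of 0] by simp
  ultimately show ?thesis
    by (rule power2_le_imp_le)
qed

lemma diagonal_op_basis:
  fixes e :: "nat \<Rightarrow> 'a::{real_inner,complete_space}"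
  assumes "orthonormal_seq e"
  shows "diagonal_op e d (e k) = d k *\<^sub>R e k"
proof -
  have "(\<lambda>j. (d j * inner (e k) (e j)) *\<^sub>R e j) = (\<lambda>j. if j = k then d k *\<^sub>R e k else 0)"
    using assms by (auto simp: orthonormal_seqD)
  moreover have "(\<lambda>j. if j = k then d k *\<^sub>R e k else 0) sums (d k *\<^sub>R e k)"
    by (rule sums_single)
  ultimately show ?thesis
    unfolding diagonal_op_def by (simp add: sums_iff)
qed

lemma diagonal_op_eqI:
  fixes e :: "nat \<Rightarrow> 'a::{real_inner,complete_space}"
  assumes "orthonormal_basis e" "\<And>j. \<bar>d j\<bar> \<le> B"
    and "\<And>x k. inner (T x) (e k) = d k * inner x (e k)"
  shows "T = diagonal_op e d"
proof (rule ext, rule orthonormal_basis_eqI[OF assms(1)])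
  show "inner (T x) (e k) = inner (diagonal_op e d x) (e k)" for x k
    by (simp only: assms(3) inner_diagonal_op[OF orthonormal_basis_imp_orthonormal_seq[OF assms(1)] assms(2)])
qed

lemma bounded_linear_diagonal_op:
  fixes e :: "nat \<Rightarrow> 'a::{real_inner,complete_space}"
  assumes "orthonormal_basis e" "\<And>j. \<bar>d j\<bar> \<le> B"
  shows "bounded_linear (diagonal_op e d)"
proof -
  have ons: "orthonormal_seq e"
    using assms(1) by (rule orthonormal_basis_imp_orthonormal_seq)
  note coeff = inner_diagonal_op[OF ons assms(2)]
  show ?thesis
  proof (rule bounded_linear_intro[where K=B])
    show "diagonal_op e d (x + y) = diagonal_op e d x + diagonal_op e d y" for x y
      by (rule orthonormal_basis_eqI[OF assms(1)]) (simp add: coeff inner_add_left algebra_simps)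
    show "diagonal_op e d (c *\<^sub>R x) = c *\<^sub>R diagonal_op e d x" for c x
      by (rule orthonormal_basis_eqI[OF assms(1)]) (simp add: coeff)
    show "norm (diagonal_op e d x) \<le> norm x * B" for x
      using norm_diagonal_op_le[OF ons assms(2)] by (simp add: mult.commute)
  qed
qed

lemma diagonal_op_comp:
  fixes e :: "nat \<Rightarrow> 'a::{real_inner,complete_space}"
  assumes "orthonormal_basis e" "\<And>j. \<bar>d j\<bar> \<le> B" "\<And>j. \<bar>d' j\<bar> \<le> B'"
  shows "diagonal_op e d (diagonal_op e d' x) = diagonal_op e (\<lambda>j. d j * d' j) x"
proof -
  have ons: "orthonormal_seq e"
    using assms(1) by (rule orthonormal_basis_imp_orthonormal_seq)
  have bound: "\<bar>d j * d' j\<bar> \<le> B * B'" for j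
    using assms(2,3)[of j] by (simp add: abs_mult mult_mono')
  show ?thesis
    by (rule orthonormal_basis_eqI[OF assms(1)])
      (simp add: inner_diagonal_op[OF ons assms(2)] inner_diagonal_op[OF ons assms(3)]
        inner_diagonal_op[OF ons bound])
qed

lemma inj_diagonal_op:
  fixes e :: "nat \<Rightarrow> 'a::{real_inner,complete_space}"
  assumes "orthonormal_basis e" "\<And>j. \<bar>d j\<bar> \<le> B" "\<And>j. d j \<noteq> 0"
  shows "inj (diagonal_op e d)"
proof (rule injI)
  fix x y assume eq: "diagonal_op e d x = diagonal_op e d y"
  have "d k * inner x (e k) = d k * inner y (e k)" for k
    using arg_cong[OF eq, of "\<lambda>z. inner z (e k)"]
    by (simp add: inner_diagonal_op[OF orthonormal_basis_imp_orthonormal_seq[OF assms(1)] assms(2)])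
  then show "x = y"
    using assms(3) by (intro orthonormal_basis_eqI[OF assms(1)]) simp
qed

lemma selfadjoint_diagonal_op:
  fixes e :: "nat \<Rightarrow> 'a::{real_inner,complete_space}"
  assumes "orthonormal_seq e" "\<And>j. \<bar>d j\<bar> \<le> B"
  shows "selfadjoint_op (diagonal_op e d)"
  unfolding selfadjoint_op_def
proof (intro allI)
  fix x y
  have "(\<lambda>j. d j * inner y (e j) * inner x (e j)) sums inner (diagonal_op e d y) x"
    by (rule diagonal_op_inner_sums[OF assms])
  then have "(\<lambda>j. d j * inner x (e j) * inner y (e j)) sums inner x (diagonal_op e d y)"
    by (simp add: inner_commute[of x] ac_simps)
  moreover have "(\<lambda>j. d j * inner x (e j) * inner y (e j)) sums inner (diagonal_op e d x) y"
    by (rule diagonal_op_inner_sums[OF assms])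
  ultimately show "inner (diagonal_op e d x) y = inner x (diagonal_op e d y)"
    by (simp add: sums_unique2)
qed

lemma positive_diagonal_op:
  fixes e :: "nat \<Rightarrow> 'a::{real_inner,complete_space}"
  assumes "orthonormal_seq e" "\<And>j. \<bar>d j\<bar> \<le> B" "\<And>j. d j \<ge> 0"
  shows "positive_op (diagonal_op e d)"
  unfolding positive_op_def
proof
  fix x
  have "0 \<le> d j * inner x (e j) * inner x (e j)" for j
    using assms(3)[of j] by (simp add: mult.assoc)
  moreover have "(\<lambda>j. d j * inner x (e j) * inner x (e j)) sums inner (diagonal_op e d x) x"
    by (rule diagonal_op_inner_sums[OF assms(1,2)])
  ultimately show "inner (diagonal_op e d x) x \<ge> 0"
    by (rule sums_le[OF _ sums_zero])
qed

lemma selfadjoint_eigenbasis_eq_diagonal_op: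
  fixes e :: "nat \<Rightarrow> 'a::{real_inner,complete_space}"
  assumes "orthonormal_basis e" "\<And>j. \<bar>d j\<bar> \<le> B"
    and "selfadjoint_op T" "\<And>j. T (e j) = d j *\<^sub>R e j"
  shows "T = diagonal_op e d"
  using assms(3,4) by (intro diagonal_op_eqI[OF assms(1,2)]) (simp add: selfadjoint_op_def)

lemma positive_sqrt_eigenvector:
  assumes "linear S" "selfadjoint_op S" "positive_op S"
    and "S (S v) = c^2 *\<^sub>R v" "c \<ge> 0"
  shows "S v = c *\<^sub>R v"
proof (cases "c = 0")
  case True
  then have "inner (S v) (S v) = 0"
    using assms(2,4) by (simp add: selfadjoint_op_def)
  then show ?thesis
    using True by simp
next
  case False
  define w where "w = S v - c *\<^sub>R v"
  have "S w = c^2 *\<^sub>R v - c *\<^sub>R S v"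
    using assms(4) by (simp add: w_def linear_diff[OF assms(1)] linear_scale[OF assms(1)])
  then have "S w = - c *\<^sub>R w"
    by (simp add: w_def power2_eq_square algebra_simps)
  moreover have "inner (S w) w \<ge> 0"
    using assms(3) by (simp add: positive_op_def)
  ultimately have "c * inner w w \<le> 0"
    by simp
  then have "inner w w \<le> 0"
    using False \<open>c \<ge> 0\<close> by (simp add: mult_le_0_iff)
  then have "inner w w = 0"
    using inner_ge_zero[of w] by linarith
  then show ?thesis
    by (simp add: w_def)
qed

lemma sqrt_op_diagonal_op:
  fixes e :: "nat \<Rightarrow> 'a::{real_inner,complete_space}"
  assumes onb: "orthonormal_basis e" and "\<And>j. d j \<ge> 0" "\<And>j. d j \<le> B"
  shows "sqrt_op (diagonal_op e d) = diagonal_op e (\<lambda>j. sqrt (d j))"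
proof -
  have ons: "orthonormal_seq e"
    using onb by (rule orthonormal_basis_imp_orthonormal_seq)
  have sB: "\<bar>sqrt (d j)\<bar> \<le> sqrt B" for j
    using assms(2,3)[of j] by (simp add: real_sqrt_le_mono)
  let ?S = "diagonal_op e (\<lambda>j. sqrt (d j))"
  let ?P = "\<lambda>S. bounded_linear S \<and> selfadjoint_op S \<and> positive_op S \<and> S \<circ> S = diagonal_op e d"
  have "?S \<circ> ?S = diagonal_op e d"
    using assms(2) by (simp add: fun_eq_iff diagonal_op_comp[OF onb sB sB])
  then have "?P ?S"
    using bounded_linear_diagonal_op[OF onb sB] selfadjoint_diagonal_op[OF ons sB]
      positive_diagonal_op[OF ons sB] assms(2) by simp
  moreover have "S = ?S" if P: "?P S" for S
  proof (rule selfadjoint_eigenbasis_eq_diagonal_op[OF onb sB])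
    show "selfadjoint_op S"
      using P by simp
    fix j
    have "S (S (e j)) = diagonal_op e d (e j)"
      using P by (simp add: fun_eq_iff)
    also have "\<dots> = (sqrt (d j))^2 *\<^sub>R e j"
      using assms(2)[of j] by (simp add: diagonal_op_basis[OF ons])
    finally show "S (e j) = sqrt (d j) *\<^sub>R e j"
      using P assms(2)[of j] by (intro positive_sqrt_eigenvector[where S=S]) (simp_all add: bounded_linear.linear)
  qed
  ultimately show ?thesis
    unfolding sqrt_op_def by (rule the_equality)
qed

lemma diagonal_op_one:
  fixes e :: "nat \<Rightarrow> 'a::{real_inner,complete_space}"
  assumes "orthonormal_basis e"
  shows "diagonal_op e (\<lambda>_. 1) x = x"
  by (rule orthonormal_basis_eqI[OF assms])
    (simp add: inner_diagonal_op[where B=1, OF orthonormal_basis_imp_orthonormal_seq[OF assms]])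

lemma dense_range_diagonal_op:
  fixes e :: "nat \<Rightarrow> 'a::{real_inner,complete_space}"
  assumes onb: "orthonormal_basis e" and "\<And>j. \<bar>d j\<bar> \<le> B" "\<And>j. d j \<noteq> 0"
  shows "closure (range (diagonal_op e d)) = UNIV"
proof -
  have "e j = diagonal_op e d ((1 / d j) *\<^sub>R e j)" for j
    using assms(3)[of j]
    by (simp add: linear_scale[OF bounded_linear.linear[OF bounded_linear_diagonal_op[OF onb assms(2)]]]
        diagonal_op_basis[OF orthonormal_basis_imp_orthonormal_seq[OF onb]])
  then have "range e \<subseteq> range (diagonal_op e d)"
    by blast
  moreover have "subspace (range (diagonal_op e d))"
    using bounded_linear_diagonal_op[OF onb assms(2)]
    by (intro linear_subspace_image subspace_UNIV) (rule bounded_linear.linear)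
  ultimately have "span (range e) \<subseteq> range (diagonal_op e d)"
    by (rule span_minimal)
  then have "closure (span (range e)) \<subseteq> closure (range (diagonal_op e d))"
    by (rule closure_mono)
  then show ?thesis
    using onb by (auto simp: orthonormal_basis_def)
qed

section \<open>Compact operators\<close>

lemma not_tendsto_0_subseqE:
  fixes X :: "nat \<Rightarrow> 'a::real_normed_vector"
  assumes "\<not> X \<longlonglongrightarrow> 0"
  obtains \<epsilon> and r :: "nat \<Rightarrow> nat" where "\<epsilon> > 0" "strict_mono r" "\<And>n. \<epsilon> \<le> norm (X (r n))"
proof -
  obtain \<epsilon> where "\<epsilon> > 0" and "\<not> eventually (\<lambda>j. dist (X j) 0 < \<epsilon>) sequentially"
    using assms unfolding tendsto_iff by blast
  then have "frequently (\<lambda>j. \<epsilon> \<le> norm (X j)) sequentially"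
    by (simp add: not_eventually not_less)
  then have "infinite {j. \<epsilon> \<le> norm (X j)}"
    by (simp add: cofinite_eq_sequentially[symmetric] frequently_cofinite)
  from infinite_enumerate[OF this]
  obtain r :: "nat \<Rightarrow> nat" where "strict_mono r" and "\<forall>n. r n \<in> {j. \<epsilon> \<le> norm (X j)}"
    by blast
  then have "\<epsilon> \<le> norm (X (r n))" for n
    by simp
  with \<open>\<epsilon> > 0\<close> \<open>strict_mono r\<close> show ?thesis
    by (rule that)
qed

lemma compact_op_image_cball:
  assumes "compact_op K" "norm x \<le> 1"
  shows "K x \<in> closure (K ` ball 0 1)"
proof -
  have "K ` closure (ball 0 1) \<subseteq> closure (K ` ball 0 1)"
    using assms(1) unfolding compact_op_def
    by (intro image_closure_subset[OF linear_continuous_on closed_closure closure_subset]) simp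
  with assms(2) show ?thesis
    by auto
qed

lemma compact_op_orthonormal_tendsto_0:
  fixes e :: "nat \<Rightarrow> 'a::real_inner" and K :: "'a \<Rightarrow> 'b::real_inner"
  assumes K: "compact_op K" and ons: "orthonormal_seq e"
  shows "(\<lambda>j. K (e j)) \<longlonglongrightarrow> 0"
proof (rule ccontr)
  assume "\<not> (\<lambda>j. K (e j)) \<longlonglongrightarrow> 0"
  then obtain \<epsilon> and r :: "nat \<Rightarrow> nat"
    where "\<epsilon> > 0" and r: "strict_mono r" and far: "\<And>n. \<epsilon> \<le> norm (K (e (r n)))"
    using not_tendsto_0_subseqE by blast
  have bl: "bounded_linear K" and cpt: "compact (closure (K ` ball 0 1))"
    using K by (simp_all add: compact_op_def)
  have "\<forall>n. K (e (r n)) \<in> closure (K ` ball 0 1)"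
    using compact_op_image_cball[OF K] by (simp add: norm_orthonormal_seq[OF ons])
  then obtain y \<tau> where "y \<in> closure (K ` ball 0 1)" and \<tau>: "strict_mono \<tau>"
    and "((\<lambda>n. K (e (r n))) \<circ> \<tau>) \<longlonglongrightarrow> y"
    by (rule seq_compactE[OF compact_imp_seq_compact[OF cpt], of "\<lambda>n. K (e (r n))"])
  then have lim: "(\<lambda>n. K (e (r (\<tau> n)))) \<longlonglongrightarrow> y"
    by (simp add: o_def)
  text \<open>The limit is orthogonal to itself because \<open>K (e j)\<close> tends weakly to \<open>0\<close>.\<close>
  have "(\<lambda>j. inner (K (e j)) y) \<longlonglongrightarrow> 0"
    using ons bounded_linear_compose[OF bounded_linear_inner_left bl]
    by (rule bounded_linear_orthonormal_tendsto_0)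
  from LIMSEQ_subseq_LIMSEQ[OF this strict_mono_o[OF r \<tau>]]
  have "(\<lambda>n. inner (K (e (r (\<tau> n)))) y) \<longlonglongrightarrow> 0"
    by (simp add: o_def)
  moreover have "(\<lambda>n. inner (K (e (r (\<tau> n)))) y) \<longlonglongrightarrow> inner y y"
    using lim by (intro tendsto_inner tendsto_const)
  ultimately have "0 = inner y y"
    by (rule LIMSEQ_unique)
  moreover have "\<epsilon> \<le> norm y"
    using far by (intro LIMSEQ_le_const[OF tendsto_norm[OF lim]]) blast
  ultimately show False
    using \<open>\<epsilon> > 0\<close> by simp
qed

text \<open>The set of all \<open>(\<Sum>j<n. c j *\<^sub>R e j)\<close> with \<open>\<bar>c j\<bar> \<le> B\<close>, built as an iterated
  Minkowski sum so that compactness follows from \<open>compact_sums\<close>.\<close>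
fun coordinate_box :: "(nat \<Rightarrow> 'a::real_normed_vector) \<Rightarrow> real \<Rightarrow> nat \<Rightarrow> 'a set" where
  "coordinate_box e B 0 = {0}"
| "coordinate_box e B (Suc n) =
     {x + y | x y. x \<in> coordinate_box e B n \<and> y \<in> (\<lambda>t. t *\<^sub>R e n) ` {-B..B}}"

lemma compact_coordinate_box: "compact (coordinate_box e B n)"
proof (induction n)
  case (Suc n)
  have "compact ((\<lambda>t. t *\<^sub>R e n) ` {-B..B})"
    by (intro compact_continuous_image continuous_intros) simp
  with Suc show ?case
    by (simp add: compact_sums)
qed simp

lemma sum_mem_coordinate_box:
  "(\<And>j. j < n \<Longrightarrow> \<bar>c j\<bar> \<le> B) \<Longrightarrow> (\<Sum>j<n. c j *\<^sub>R e j) \<in> coordinate_box e B n"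
proof (induction n)
  case (Suc n)
  have "c n \<in> {-B..B}"
    using Suc.prems[of n] by (simp add: abs_le_iff)
  then have "c n *\<^sub>R e n \<in> (\<lambda>t. t *\<^sub>R e n) ` {-B..B}"
    by (rule imageI)
  with Suc show ?case
    by auto
qed simp

lemma compact_closure_if_approximable:
  fixes A :: "'a::{metric_space,complete_space} set"
  assumes "\<And>\<epsilon>. \<epsilon> > 0 \<Longrightarrow> \<exists>K. compact K \<and> (\<forall>x\<in>A. \<exists>y\<in>K. dist x y \<le> \<epsilon>)"
  shows "compact (closure A)"
  unfolding compact_eq_totally_bounded complete_eq_closed
proof (intro conjI allI impI closed_closure)
  fix \<epsilon> :: real assume "\<epsilon> > 0"
  then obtain K where "compact K" and K: "\<forall>x\<in>A. \<exists>y\<in>K. dist x y \<le> \<epsilon>/3"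
    using assms[of "\<epsilon>/3"] by auto
  then obtain k where k: "finite k" "K \<subseteq> (\<Union>z\<in>k. ball z (\<epsilon>/3))"
    using \<open>\<epsilon> > 0\<close> unfolding compact_eq_totally_bounded by (meson divide_pos_pos zero_less_numeral)
  have "A \<subseteq> (\<Union>z\<in>k. cball z (2/3 * \<epsilon>))"
  proof
    fix x assume "x \<in> A"
    then obtain y where "y \<in> K" "dist x y \<le> \<epsilon>/3"
      using K by blast
    moreover from \<open>y \<in> K\<close> obtain z where "z \<in> k" "dist z y < \<epsilon>/3"
      using k(2) by auto
    ultimately have "z \<in> k" "dist z x \<le> 2/3 * \<epsilon>"
      using dist_triangle[of z x y] by (simp_all add: dist_commute)
    then show "x \<in> (\<Union>z\<in>k. cball z (2/3 * \<epsilon>))"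
      by auto
  qed
  then have "closure A \<subseteq> (\<Union>z\<in>k. cball z (2/3 * \<epsilon>))"
    using k(1) by (intro closure_minimal closed_UN) auto
  also have "\<dots> \<subseteq> (\<Union>z\<in>k. ball z \<epsilon>)"
    using \<open>\<epsilon> > 0\<close> by auto
  finally show "\<exists>k. finite k \<and> closure A \<subseteq> (\<Union>z\<in>k. ball z \<epsilon>)"
    using k(1) by blast
qed

lemma diagonal_op_near_coordinate_box:
  fixes e :: "nat \<Rightarrow> 'a::{real_inner,complete_space}"
  assumes onb: "orthonormal_basis e" and B: "\<And>j. \<bar>d j\<bar> \<le> B"
    and N: "\<And>j. j \<ge> N \<Longrightarrow> \<bar>d j\<bar> \<le> \<epsilon>" and "norm x \<le> 1"
  shows "\<exists>v\<in>coordinate_box e B N. dist (diagonal_op e d x) v \<le> \<epsilon>"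
proof
  have ons: "orthonormal_seq e"
    using onb by (rule orthonormal_basis_imp_orthonormal_seq)
  define tail where "tail j = (if j < N then 0 else d j)" for j
  have "\<epsilon> \<ge> 0"
    using N[of N] by simp
  then have tail_bound: "\<bar>tail j\<bar> \<le> \<epsilon>" for j
    using N[of j] by (simp add: tail_def)
  define P where "P = (\<Sum>j<N. (d j * inner x (e j)) *\<^sub>R e j)"
  have "diagonal_op e d x = P + diagonal_op e tail x"
    by (rule orthonormal_basis_eqI[OF onb])
      (simp add: P_def inner_add_left inner_diagonal_op[OF ons B] inner_diagonal_op[where d=tail, OF ons tail_bound]
        inner_sum_orthonormal[OF ons] tail_def)
  moreover have "norm (diagonal_op e tail x) \<le> \<epsilon>"
    using norm_diagonal_op_le[where d=tail and x=x, OF ons tail_bound] mult_left_le[OF \<open>norm x \<le> 1\<close> \<open>\<epsilon> \<ge> 0\<close>]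
    by simp
  ultimately show "dist (diagonal_op e d x) P \<le> \<epsilon>"
    by (simp add: dist_norm)
  have "\<bar>d j * inner x (e j)\<bar> \<le> B" for j
  proof -
    have "\<bar>inner x (e j)\<bar> \<le> 1"
      using Cauchy_Schwarz_ineq2[of x "e j"] \<open>norm x \<le> 1\<close> norm_orthonormal_seq[OF ons] by simp
    then show ?thesis
      using B[of j] mult_mono[of "\<bar>d j\<bar>" B "\<bar>inner x (e j)\<bar>" 1] by (simp add: abs_mult)
  qed
  then show "P \<in> coordinate_box e B N"
    unfolding P_def by (rule sum_mem_coordinate_box)
qed

lemma compact_op_diagonal_op:
  fixes e :: "nat \<Rightarrow> 'a::{real_inner,complete_space}"
  assumes onb: "orthonormal_basis e" and "d \<longlonglongrightarrow> 0"
  shows "compact_op (diagonal_op e d)"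
proof -
  obtain B where B: "\<And>j. \<bar>d j\<bar> \<le> B"
    using convergent_imp_Bseq[OF convergentI[OF assms(2)]] unfolding Bseq_def by auto
  have "\<exists>K. compact K \<and> (\<forall>u\<in>diagonal_op e d ` ball 0 1. \<exists>v\<in>K. dist u v \<le> \<epsilon>)"
    if "\<epsilon> > 0" for \<epsilon>
  proof -
    obtain N where "\<And>j. j \<ge> N \<Longrightarrow> \<bar>d j\<bar> \<le> \<epsilon>"
      using \<open>\<epsilon> > 0\<close> assms(2) unfolding LIMSEQ_iff by (fastforce intro: less_imp_le)
    then have "\<forall>u\<in>diagonal_op e d ` ball 0 1. \<exists>v\<in>coordinate_box e B N. dist u v \<le> \<epsilon>"
      using diagonal_op_near_coordinate_box[OF onb B] by fastforce
    then show ?thesis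
      using compact_coordinate_box by blast
  qed
  then have "compact (closure (diagonal_op e d ` ball 0 1))"
    by (rule compact_closure_if_approximable)
  then show ?thesis
    using bounded_linear_diagonal_op[OF onb B] by (simp add: compact_op_def)
qed

section \<open>Cameron--Martin spaces of diagonal operators\<close>

lemma pos_tendsto_pos_bounded_away:
  fixes r :: "nat \<Rightarrow> real"
  assumes "\<And>j. r j > 0" "r \<longlonglongrightarrow> a" "a > 0"
  obtains m M where "m > 0" "\<And>j. m \<le> r j" "\<And>j. r j \<le> M"
proof -
  obtain M where M: "\<And>j. norm (r j) \<le> M"
    using convergent_imp_Bseq[OF convergentI[OF assms(2)]] unfolding Bseq_def by auto
  have "(\<lambda>j. inverse (r j)) \<longlonglongrightarrow> inverse a"
    using assms(2,3) by (intro tendsto_inverse) auto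
  then have "Bseq (\<lambda>j. inverse (r j))"
    by (rule convergent_imp_Bseq[OF convergentI])
  then obtain L where L: "L > 0" "\<And>j. norm (inverse (r j)) \<le> L"
    unfolding Bseq_def by auto
  have "1 / L \<le> r j" for j
    using L(2)[of j] assms(1)[of j] L(1) by (simp add: field_simps)
  moreover have "r j \<le> M" for j
    using M[of j] by simp
  ultimately show ?thesis
    using that[of "1 / L" M] L(1) by simp
qed

context
  fixes e :: "nat \<Rightarrow> 'a::{real_inner,complete_space}" and \<gamma> :: "nat \<Rightarrow> real" and B :: real
  assumes onb: "orthonormal_basis e" and \<gamma>_pos: "\<And>j. \<gamma> j > 0" and \<gamma>_le: "\<And>j. \<bar>\<gamma> j\<bar> \<le> B"
begin

private lemma ons: "orthonormal_seq e"
  using onb by (rule orthonormal_basis_imp_orthonormal_seq)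

private lemma sqrt_\<gamma>_bound: "\<bar>sqrt (\<gamma> j)\<bar> \<le> sqrt B"
  using \<gamma>_le[of j] abs_of_pos[OF \<gamma>_pos[of j]] by (simp add: real_sqrt_le_mono)

private lemma sqrt_op_\<gamma>: "sqrt_op (diagonal_op e \<gamma>) = diagonal_op e (\<lambda>j. sqrt (\<gamma> j))"
  using \<gamma>_pos \<gamma>_le by (intro sqrt_op_diagonal_op[OF onb]) (auto intro: less_imp_le abs_le_D1)

lemma invsqrt_op_diagonal_op: "invsqrt_op (diagonal_op e \<gamma>) (diagonal_op e (\<lambda>j. sqrt (\<gamma> j)) x) = x"
proof -
  have "inj (diagonal_op e (\<lambda>j. sqrt (\<gamma> j)))"
    using \<gamma>_pos by (intro inj_diagonal_op[OF onb sqrt_\<gamma>_bound]) (simp add: less_imp_neq[symmetric])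
  then show ?thesis
    unfolding invsqrt_op_def sqrt_op_\<gamma> by (rule inv_into_f_f) simp
qed

lemma CM_space_diagonal_op: "CM_space (diagonal_op e \<gamma>) = range (diagonal_op e (\<lambda>j. sqrt (\<gamma> j)))"
  by (simp add: CM_space_def sqrt_op_\<gamma>)

lemma sandwich_op_basis:
  assumes "linear Ct" "\<And>j. Ct (e j) = \<gamma>t j *\<^sub>R e j"
  shows "e j \<in> sandwich_dom (diagonal_op e \<gamma>) Ct"
    and "sandwich_op (diagonal_op e \<gamma>) Ct (e j) = (\<gamma>t j / \<gamma> j) *\<^sub>R e j"
proof -
  let ?S = "diagonal_op e (\<lambda>j. sqrt (\<gamma> j))"
  have S_scaled_basis: "?S (c *\<^sub>R e j) = (c * sqrt (\<gamma> j)) *\<^sub>R e j" for c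
    by (simp add: linear_scale[OF bounded_linear.linear[OF bounded_linear_diagonal_op[OF onb sqrt_\<gamma>_bound]]]
        diagonal_op_basis[OF ons])
  have "sqrt (\<gamma> j) > 0"
    using \<gamma>_pos[of j] by simp
  then have ej: "e j = ?S ((1 / sqrt (\<gamma> j)) *\<^sub>R e j)"
    by (simp add: S_scaled_basis)
  then have inv_ej: "invsqrt_op (diagonal_op e \<gamma>) (e j) = (1 / sqrt (\<gamma> j)) *\<^sub>R e j"
    by (metis invsqrt_op_diagonal_op)
  have "Ct ((1 / sqrt (\<gamma> j)) *\<^sub>R e j) = (\<gamma>t j / sqrt (\<gamma> j)) *\<^sub>R e j"
    by (simp add: linear_scale[OF assms(1)] assms(2))
  also have "\<dots> = ?S ((\<gamma>t j / \<gamma> j) *\<^sub>R e j)"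
  proof -
    have "\<gamma>t j / \<gamma> j * sqrt (\<gamma> j) = \<gamma>t j / sqrt (\<gamma> j)"
      using \<gamma>_pos[of j] by (simp add: divide_simps mult.assoc)
    then show ?thesis
      by (simp add: S_scaled_basis)
  qed
  finally have "Ct (invsqrt_op (diagonal_op e \<gamma>) (e j)) = ?S ((\<gamma>t j / \<gamma> j) *\<^sub>R e j)"
    by (simp only: inv_ej)
  then show "e j \<in> sandwich_dom (diagonal_op e \<gamma>) Ct"
    and "sandwich_op (diagonal_op e \<gamma>) Ct (e j) = (\<gamma>t j / \<gamma> j) *\<^sub>R e j"
    using ej by (auto simp: sandwich_dom_def sandwich_op_def CM_space_diagonal_op invsqrt_op_diagonal_op
        intro: range_eqI)
qed

lemma ratio_tendsto_if_sandwich_minus_compact: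
  assumes "linear Ct" "\<And>j. Ct (e j) = \<gamma>t j *\<^sub>R e j"
    and "sandwich_minus_compact (diagonal_op e \<gamma>) Ct a"
  shows "(\<lambda>j. \<gamma>t j / \<gamma> j) \<longlonglongrightarrow> a"
proof -
  obtain K where "compact_op K"
    and K: "\<And>x. x \<in> sandwich_dom (diagonal_op e \<gamma>) Ct \<Longrightarrow>
      sandwich_op (diagonal_op e \<gamma>) Ct x - a *\<^sub>R x = K x"
    using assms(3) unfolding sandwich_minus_compact_def by blast
  have "K (e j) = (\<gamma>t j / \<gamma> j - a) *\<^sub>R e j" for j
    using K[OF sandwich_op_basis(1)[OF assms(1,2)]] sandwich_op_basis(2)[OF assms(1,2)]
    by (simp add: scaleR_left_diff_distrib)
  then have "norm (K (e j)) = \<bar>\<gamma>t j / \<gamma> j - a\<bar>" for j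
    by (simp add: norm_orthonormal_seq[OF ons])
  moreover have "(\<lambda>j. norm (K (e j))) \<longlonglongrightarrow> 0"
    using compact_op_orthonormal_tendsto_0[OF \<open>compact_op K\<close> ons] by (rule tendsto_norm_zero)
  ultimately have "(\<lambda>j. \<gamma>t j / \<gamma> j - a) \<longlonglongrightarrow> 0"
    by (simp add: tendsto_rabs_zero_iff)
  then show ?thesis
    by (simp add: LIM_zero_iff)
qed

lemma sandwich_minus_compact_if_ratio_tendsto:
  assumes "(\<lambda>j. \<gamma>t j / \<gamma> j) \<longlonglongrightarrow> a"
  shows "sandwich_minus_compact (diagonal_op e \<gamma>) (diagonal_op e \<gamma>t) a"
proof -
  define r where "r j = \<gamma>t j / \<gamma> j" for j
  obtain R where R: "\<And>j. \<bar>r j\<bar> \<le> R"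
    using convergent_imp_Bseq[OF convergentI[OF assms]] unfolding Bseq_def r_def by auto
  let ?S = "diagonal_op e (\<lambda>j. sqrt (\<gamma> j))"
  let ?D = "diagonal_op e (\<lambda>j. r j * sqrt (\<gamma> j))"
  have D_bound: "\<bar>r j * sqrt (\<gamma> j)\<bar> \<le> R * sqrt B" for j
    using R[of j] sqrt_\<gamma>_bound[of j] by (simp add: abs_mult mult_mono')
  have shift_bound: "\<bar>r j - a\<bar> \<le> R + \<bar>a\<bar>" for j
    using R[of j] by linarith
  have "sqrt (\<gamma> j) * (r j * sqrt (\<gamma> j)) = \<gamma>t j" for j
  proof -
    have "sqrt (\<gamma> j) * (r j * sqrt (\<gamma> j)) = r j * (sqrt (\<gamma> j))^2"
      by (simp only: power2_eq_square mult_ac)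
    also have "\<dots> = \<gamma>t j"
      using \<gamma>_pos[of j] by (simp add: r_def)
    finally show ?thesis .
  qed
  then have Ct_eq: "diagonal_op e \<gamma>t x = ?S (?D x)" for x
    by (simp add: diagonal_op_comp[OF onb sqrt_\<gamma>_bound D_bound])
  have dom: "sandwich_dom (diagonal_op e \<gamma>) (diagonal_op e \<gamma>t) = range ?S"
    by (auto simp: sandwich_dom_def CM_space_diagonal_op invsqrt_op_diagonal_op Ct_eq)
  have op: "sandwich_op (diagonal_op e \<gamma>) (diagonal_op e \<gamma>t) (?S x) = ?D x" for x
    by (simp add: sandwich_op_def invsqrt_op_diagonal_op Ct_eq)
  have shift: "?D x - a *\<^sub>R ?S x = diagonal_op e (\<lambda>j. r j - a) (?S x)" for x
    by (rule orthonormal_basis_eqI[OF onb])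
      (simp add: inner_diff_left inner_diagonal_op[OF ons D_bound] inner_diagonal_op[OF ons sqrt_\<gamma>_bound]
        inner_diagonal_op[OF ons shift_bound] algebra_simps)
  have "(\<lambda>j. r j - a) \<longlonglongrightarrow> 0"
    using assms by (simp add: r_def LIM_zero)
  then have "compact_op (diagonal_op e (\<lambda>j. r j - a))"
    by (rule compact_op_diagonal_op[OF onb])
  moreover have "closure (range ?S) = UNIV"
    using \<gamma>_pos by (intro dense_range_diagonal_op[OF onb sqrt_\<gamma>_bound]) (simp add: less_imp_neq[symmetric])
  ultimately show ?thesis
    unfolding sandwich_minus_compact_def dom by (auto simp: op shift)
qed

end

lemma CM_norm_equivalent_if_ratio_bounded:
  fixes e :: "nat \<Rightarrow> 'a::{real_inner,complete_space}"
  assumes onb: "orthonormal_basis e" and \<gamma>: "\<And>j. \<gamma> j > 0" "\<And>j. \<bar>\<gamma> j\<bar> \<le> B"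
    and \<gamma>t: "\<And>j. \<gamma>t j > 0" and m: "m > 0" "\<And>j. m \<le> \<gamma>t j / \<gamma> j" and M: "\<And>j. \<gamma>t j / \<gamma> j \<le> M"
  shows "CM_norm_equivalent (diagonal_op e \<gamma>) (diagonal_op e \<gamma>t)"
proof -
  define q where "q j = sqrt (\<gamma>t j / \<gamma> j)" for j
  let ?S = "diagonal_op e (\<lambda>j. sqrt (\<gamma> j))"
  let ?T = "diagonal_op e (\<lambda>j. sqrt (\<gamma>t j))"
  let ?Q = "diagonal_op e q"
  let ?R = "diagonal_op e (\<lambda>j. 1 / q j)"
  have "M > 0"
    using m(1) m(2)[of 0] M[of 0] by linarith
  have q_pos: "q j > 0" for j
    using \<gamma>[of j] \<gamma>t[of j] by (simp add: q_def)
  have q_le: "\<bar>q j\<bar> \<le> sqrt M" for j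
    using M[of j] q_pos[of j] by (simp add: q_def real_sqrt_le_mono)
  have q_inv_le: "\<bar>1 / q j\<bar> \<le> 1 / sqrt m" for j
    using m(2)[of j] m(1) q_pos[of j] by (simp add: q_def real_sqrt_le_mono frac_le)
  have s_le: "\<bar>sqrt (\<gamma> j)\<bar> \<le> sqrt B" for j
    using \<gamma>(2)[of j] abs_of_pos[OF \<gamma>(1)[of j]] by (simp add: real_sqrt_le_mono)
  have \<gamma>t_le: "\<bar>\<gamma>t j\<bar> \<le> M * B" for j
  proof -
    have "\<bar>\<gamma>t j\<bar> = \<gamma>t j / \<gamma> j * \<bar>\<gamma> j\<bar>"
      using \<gamma>(1)[of j] \<gamma>t[of j] by simp
    also have "\<dots> \<le> M * B"
      using M[of j] \<gamma>[of j] \<gamma>t[of j] \<open>M > 0\<close> by (intro mult_mono) auto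
    finally show ?thesis .
  qed
  have t_le: "\<bar>sqrt (\<gamma>t j)\<bar> \<le> sqrt (M * B)" for j
    using \<gamma>t_le[of j] abs_of_pos[OF \<gamma>t[of j]] by (simp add: real_sqrt_le_mono)
  have "sqrt (\<gamma>t j) * (1 / q j) = sqrt (\<gamma> j)" for j
    using \<gamma>(1)[of j] \<gamma>t[of j] by (simp add: q_def real_sqrt_divide)
  then have S_eq: "?S x = ?T (?R x)" for x
    by (simp add: diagonal_op_comp[OF onb t_le q_inv_le])
  have "sqrt (\<gamma> j) * q j = sqrt (\<gamma>t j)" for j
    using \<gamma>(1)[of j] by (simp add: q_def real_sqrt_divide)
  then have T_eq: "?T y = ?S (?Q y)" for y
    by (simp add: diagonal_op_comp[OF onb s_le q_le])
  have "q j * (1 / q j) = 1" for j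
    using q_pos[of j] by simp
  then have QR: "?Q (?R x) = x" for x
    by (simp add: diagonal_op_comp[OF onb q_le q_inv_le] diagonal_op_one[OF onb])
  have spaces: "CM_space (diagonal_op e \<gamma>) = CM_space (diagonal_op e \<gamma>t)"
    using S_eq T_eq by (auto simp: CM_space_diagonal_op[OF onb \<gamma>] CM_space_diagonal_op[OF onb \<gamma>t \<gamma>t_le])
  have norms: "CM_norm (diagonal_op e \<gamma>) (?S x) = norm x" "CM_norm (diagonal_op e \<gamma>t) (?S x) = norm (?R x)"
    for x
    by (simp add: CM_norm_def invsqrt_op_diagonal_op[OF onb \<gamma>])
      (simp only: CM_norm_def S_eq[of x] invsqrt_op_diagonal_op[OF onb \<gamma>t \<gamma>t_le])
  have "1 / sqrt M * norm x \<le> norm (?R x) \<and> norm (?R x) \<le> 1 / sqrt m * norm x" for x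
  proof
    have "norm x \<le> sqrt M * norm (?R x)"
      using norm_diagonal_op_le[where d=q and x="?R x", OF orthonormal_basis_imp_orthonormal_seq[OF onb] q_le]
      by (simp add: QR)
    then show "1 / sqrt M * norm x \<le> norm (?R x)"
      using \<open>M > 0\<close> by (simp add: field_simps)
    show "norm (?R x) \<le> 1 / sqrt m * norm x"
      by (rule norm_diagonal_op_le[OF orthonormal_basis_imp_orthonormal_seq[OF onb] q_inv_le])
  qed
  then have "\<forall>u\<in>CM_space (diagonal_op e \<gamma>). 1 / sqrt M * CM_norm (diagonal_op e \<gamma>) u
      \<le> CM_norm (diagonal_op e \<gamma>t) u \<and> CM_norm (diagonal_op e \<gamma>t) u \<le> 1 / sqrt m * CM_norm (diagonal_op e \<gamma>) u"
    by (auto simp: CM_space_diagonal_op[OF onb \<gamma>] norms)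
  then show ?thesis
    unfolding CM_norm_equivalent_def using spaces m(1) \<open>M > 0\<close>
    by (intro conjI exI[of _ "1 / sqrt M"] exI[of _ "1 / sqrt m"]) auto
qed

theorem corollary5p1:
  fixes C Ct :: "'a::{real_inner, complete_space} \<Rightarrow> 'a"
    and e :: "nat \<Rightarrow> 'a" and \<gamma> \<gamma>t :: "nat \<Rightarrow> real"
  assumes "bounded_linear C" "selfadjoint_op C" "posdef_op C" "compact_op C"
    and "bounded_linear Ct" "selfadjoint_op Ct" "posdef_op Ct" "compact_op Ct"
    and "orthonormal_basis e"
    and "\<And>j. \<gamma> j > 0" "\<And>j. \<gamma>t j > 0"
    and "\<gamma> \<longlonglongrightarrow> 0" "\<gamma>t \<longlonglongrightarrow> 0"
    and "\<And>j. C (e j) = \<gamma> j *\<^sub>R e j" "\<And>j. Ct (e j) = \<gamma>t j *\<^sub>R e j"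
  shows "(CM_norm_equivalent C Ct \<and> (\<exists>a>0. sandwich_minus_compact C Ct a))
     \<longleftrightarrow> (\<exists>a>0. (\<lambda>j. \<gamma>t j / \<gamma> j) \<longlonglongrightarrow> a)"
proof -
  note onb = \<open>orthonormal_basis e\<close> and \<gamma>_pos = \<open>\<And>j. \<gamma> j > 0\<close> and \<gamma>t_pos = \<open>\<And>j. \<gamma>t j > 0\<close>
  obtain B Bt where B: "\<And>j. \<bar>\<gamma> j\<bar> \<le> B" and Bt: "\<And>j. \<bar>\<gamma>t j\<bar> \<le> Bt"
    using convergent_imp_Bseq[OF convergentI[OF \<open>\<gamma> \<longlonglongrightarrow> 0\<close>]]
      convergent_imp_Bseq[OF convergentI[OF \<open>\<gamma>t \<longlonglongrightarrow> 0\<close>]] unfolding Bseq_def by auto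
  have C: "C = diagonal_op e \<gamma>"
    by (rule selfadjoint_eigenbasis_eq_diagonal_op[OF onb B \<open>selfadjoint_op C\<close> assms(14)])
  have Ct: "Ct = diagonal_op e \<gamma>t"
    by (rule selfadjoint_eigenbasis_eq_diagonal_op[OF onb Bt \<open>selfadjoint_op Ct\<close> assms(15)])
  show ?thesis
  proof
    assume "CM_norm_equivalent C Ct \<and> (\<exists>a>0. sandwich_minus_compact C Ct a)"
    then obtain a where "a > 0" and "sandwich_minus_compact (diagonal_op e \<gamma>) Ct a"
      unfolding C by blast
    from this(2) have "(\<lambda>j. \<gamma>t j / \<gamma> j) \<longlonglongrightarrow> a"
      by (rule ratio_tendsto_if_sandwich_minus_compact[OF onb \<gamma>_pos B
          bounded_linear.linear[OF \<open>bounded_linear Ct\<close>] assms(15)])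
    with \<open>a > 0\<close> show "\<exists>a>0. (\<lambda>j. \<gamma>t j / \<gamma> j) \<longlonglongrightarrow> a"
      by blast
  next
    assume "\<exists>a>0. (\<lambda>j. \<gamma>t j / \<gamma> j) \<longlonglongrightarrow> a"
    then obtain a where "a > 0" and lim: "(\<lambda>j. \<gamma>t j / \<gamma> j) \<longlonglongrightarrow> a"
      by blast
    have "\<gamma>t j / \<gamma> j > 0" for j
      using \<gamma>_pos[of j] \<gamma>t_pos[of j] by simp
    then obtain m M where "m > 0" "\<And>j. m \<le> \<gamma>t j / \<gamma> j" "\<And>j. \<gamma>t j / \<gamma> j \<le> M"
      using pos_tendsto_pos_bounded_away[OF _ lim \<open>a > 0\<close>] by blast
    then have "CM_norm_equivalent C Ct"
      unfolding C Ct by (rule CM_norm_equivalent_if_ratio_bounded[OF onb \<gamma>_pos B \<gamma>t_pos])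
    moreover have "sandwich_minus_compact C Ct a"
      unfolding C Ct by (rule sandwich_minus_compact_if_ratio_tendsto[OF onb \<gamma>_pos B lim])
    ultimately show "CM_norm_equivalent C Ct \<and> (\<exists>a>0. sandwich_minus_compact C Ct a)"
      using \<open>a > 0\<close> by blast
  qed
qed

end
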